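(* Let $G=(V,E)$ be a graph with node weights $c_v\ge1$, and let $\lambda\in\mathbb R$. Let $x\in\mathbb R^V$ satisfy $x\ge0$, $\sum_{v\in V}c_vx_v=1$, and $\sum_{v\in V}x_v\,q(\sigma)_v\ge\lambda$ for every ordering $\sigma$ of $V$. Then there exists $\theta\in[0,1]$ such that the set $S_\theta=\{v\in V: x_v\ge\theta\}$ is nonempty and has density $\rho(S_\theta)\ge\lambda$.
   Context: For nonempty $S\subseteq V$, $\rho(S)=|E(S)|/\sum_{v\in S}c_v$, where $E(S)$ is the set of edges with both endpoints in $S$. For an ordering $\sigma$ of $V$ and $v\in V$, $q(\sigma)_v=|\{\{u,v\}\in E: u \text{ precedes } v \text{ in }\sigma\}|$. *)

theory Defs
  imports Complex_Main
begin

definition simple_graph :: "'a set \<Rightarrow> 'a set set \<Rightarrow> bool" where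
  "simple_graph V E \<longleftrightarrow> finite V \<and>
     (\<forall>e\<in>E. \<exists>u v. e = {u, v} \<and> u \<noteq> v \<and> u \<in> V \<and> v \<in> V)"

definition induced_edges :: "'a set set \<Rightarrow> 'a set \<Rightarrow> 'a set set" where
  "induced_edges E S = {e \<in> E. e \<subseteq> S}"

definition density :: "'a set set \<Rightarrow> ('a \<Rightarrow> real) \<Rightarrow> 'a set \<Rightarrow> real" where
  "density E c S = real (card (induced_edges E S)) / (\<Sum>v\<in>S. c v)"

definition is_ordering :: "'a set \<Rightarrow> 'a list \<Rightarrow> bool" where
  "is_ordering V \<sigma> \<longleftrightarrow> distinct \<sigma> \<and> set \<sigma> = V"

definition precedes :: "'a list \<Rightarrow> 'a \<Rightarrow> 'a \<Rightarrow> bool" where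
  "precedes \<sigma> u v \<longleftrightarrow> (\<exists>i j. i < j \<and> j < length \<sigma> \<and> \<sigma> ! i = u \<and> \<sigma> ! j = v)"

definition q :: "'a set set \<Rightarrow> 'a list \<Rightarrow> 'a \<Rightarrow> nat" where
  "q E \<sigma> v = card {e \<in> E. \<exists>u. e = {u, v} \<and> precedes \<sigma> u v}"

end

theory Submission
  imports Defs
begin

text \<open>Order V by decreasing x and put g v = q(\<sigma>)_v - \<lambda> c_v, so that the hypothesis for
  this \<sigma> and the normalisation give \<Sum>_v x_v g_v \<ge> 0. Since x is antitone along \<sigma>, every
  level set S_\<theta> is an initial segment of \<sigma>, and on an initial segment the q-values count
  each induced edge exactly once; hence \<Sum>_{v\<in>S_\<theta>} g_v = |E(S_\<theta>)| - \<lambda> c(S_\<theta>).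
  Layer-cake summation writes \<Sum>_v x_v g_v as a nonnegative combination of these level-set
  sums with total weight max x > 0, so one of them is nonnegative.\<close>

lemma sum_mult_truncate_top:
  fixes x g :: "'a \<Rightarrow> real"
  assumes "finite V" and "m' \<le> m" and "\<forall>v\<in>V. x v \<le> m"
    and gap: "\<forall>v\<in>V. x v < m \<longrightarrow> x v \<le> m'"
  shows "(\<Sum>v\<in>V. x v * g v) =
    (\<Sum>v\<in>V. min (x v) m' * g v) + (m - m') * (\<Sum>v\<in>{v\<in>V. m \<le> x v}. g v)"
proof -
  have "x v * g v = min (x v) m' * g v + (if m \<le> x v then (m - m') * g v else 0)"
    if "v \<in> V" for v
    using assms(2,3) gap that by (cases "m \<le> x v") (auto simp: min_def algebra_simps)
  then have "(\<Sum>v\<in>V. x v * g v) =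
      (\<Sum>v\<in>V. min (x v) m' * g v) + (\<Sum>v\<in>V. if m \<le> x v then (m - m') * g v else 0)"
    by (simp add: sum.distrib)
  also have "(\<Sum>v\<in>V. if m \<le> x v then (m - m') * g v else 0) =
      (m - m') * (\<Sum>v\<in>{v\<in>V. m \<le> x v}. g v)"
    using \<open>finite V\<close> by (simp add: sum.inter_filter[symmetric] sum_distrib_left if_distrib)
  finally show ?thesis .
qed

lemma sum_mult_le_Max_level_sets:
  fixes x g :: "'a \<Rightarrow> real"
  assumes "finite V" and "V \<noteq> {}" and "\<forall>v\<in>V. 0 \<le> x v"
    and "\<forall>u\<in>V. (\<Sum>v\<in>{v\<in>V. x u \<le> x v}. g v) \<le> B"
  shows "(\<Sum>v\<in>V. x v * g v) \<le> B * Max (x ` V)"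
  using assms
proof (induction "card (x ` V)" arbitrary: x rule: less_induct)
  case less
  txt \<open>Truncating x at its second largest value m' removes one value and changes the
    sum by (m - m') times the sum over the top level set.\<close>
  define m where "m = Max (x ` V)"
  have fin: "finite (x ` V)" and ne: "x ` V \<noteq> {}" using less.prems by auto
  have x_le_m: "\<forall>v\<in>V. x v \<le> m" using fin by (simp add: m_def)
  obtain w where w: "w \<in> V" "x w = m" using Max_in[OF fin ne] by (auto simp: m_def)
  have top_le_B: "(\<Sum>v\<in>{v\<in>V. m \<le> x v}. g v) \<le> B" using less.prems(4) w by auto
  show ?case
  proof (cases "\<forall>v\<in>V. x v = m")
    case True
    then have "{v\<in>V. m \<le> x v} = V" by auto
    then have "(\<Sum>v\<in>V. x v * g v) = m * (\<Sum>v\<in>{v\<in>V. m \<le> x v}. g v)"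
      using True by (simp add: sum_distrib_left)
    also have "\<dots> \<le> m * B"
      using top_le_B w less.prems(3) by (intro mult_left_mono) auto
    finally show ?thesis by (simp add: m_def mult.commute)
  next
    case False
    define V' where "V' = {v\<in>V. x v < m}"
    define m' where "m' = Max (x ` V')"
    have fin': "finite (x ` V')" and ne': "x ` V' \<noteq> {}"
      using less.prems(1) False x_le_m by (auto simp: V'_def less_le)
    obtain w' where w': "w' \<in> V" "x w' = m'" "m' < m"
      using Max_in[OF fin' ne'] by (auto simp: m'_def V'_def)
    have gap: "\<forall>v\<in>V. x v < m \<longrightarrow> x v \<le> m'"
      using fin' by (auto simp: m'_def V'_def)
    define y where "y v = min (x v) m'" for v
    have y_image: "y ` V = x ` V - {m}"
      using gap w' x_le_m by (force simp: y_def min_def)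
    have "card (y ` V) < card (x ` V)"
      using y_image w fin by (metis card_Diff1_less image_eqI)
    moreover have "\<forall>v\<in>V. 0 \<le> y v" using less.prems(3) w' by (auto simp: y_def)
    moreover have "\<forall>u\<in>V. (\<Sum>v\<in>{v\<in>V. y u \<le> y v}. g v) \<le> B"
    proof
      fix u assume "u \<in> V"
      then obtain u' where u': "u' \<in> V" "x u' = y u"
        using w' by (cases "x u \<le> m'") (auto simp: y_def min_def)
      have "{v\<in>V. y u \<le> y v} = {v\<in>V. x u' \<le> x v}"
        using u' by (auto simp: y_def min_def)
      then show "(\<Sum>v\<in>{v\<in>V. y u \<le> y v}. g v) \<le> B"
        using less.prems(4) u' by (metis (no_types, lifting))
    qed
    ultimately have IH: "(\<Sum>v\<in>V. y v * g v) \<le> B * Max (y ` V)"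
      using less by blast
    have "Max (y ` V) = m'"
    proof (rule Max_eqI)
      show "m' \<in> y ` V" using w' by (force simp: y_def)
    qed (auto simp: y_def less.prems(1))
    have "(\<Sum>v\<in>V. x v * g v) =
        (\<Sum>v\<in>V. y v * g v) + (m - m') * (\<Sum>v\<in>{v\<in>V. m \<le> x v}. g v)"
      unfolding y_def using w'(3)
      by (intro sum_mult_truncate_top[OF less.prems(1) _ x_le_m gap]) simp
    also have "\<dots> \<le> B * m' + (m - m') * B"
      using IH \<open>Max (y ` V) = m'\<close> top_le_B w'(3) by (intro add_mono mult_left_mono) auto
    finally show ?thesis by (simp add: m_def algebra_simps)
  qed
qed

lemma exists_level_set_sum_nonneg:
  fixes x g :: "'a \<Rightarrow> real"
  assumes "finite V" and "\<forall>v\<in>V. 0 \<le> x v" and "\<exists>v\<in>V. 0 < x v"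
    and "0 \<le> (\<Sum>v\<in>V. x v * g v)"
  shows "\<exists>u\<in>V. 0 \<le> (\<Sum>v\<in>{v\<in>V. x u \<le> x v}. g v)"
proof (rule ccontr)
  assume neg: "\<not> ?thesis"
  define B where "B = Max ((\<lambda>u. \<Sum>v\<in>{v\<in>V. x u \<le> x v}. g v) ` V)"
  have "V \<noteq> {}" using assms(3) by blast
  then have "B < 0" using neg assms(1) by (auto simp: B_def not_le)
  moreover have "0 < Max (x ` V)"
    using assms(1,3) by (metis Max_ge finite_imageI image_eqI less_le_trans)
  moreover have "(\<Sum>v\<in>V. x v * g v) \<le> B * Max (x ` V)"
    using assms(1,2) \<open>V \<noteq> {}\<close> by (intro sum_mult_le_Max_level_sets) (auto simp: B_def)
  ultimately show False using assms(4) by (smt (verit) mult_neg_pos)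
qed

lemma precedes_asym:
  assumes "distinct \<sigma>" and "precedes \<sigma> u v"
  shows "\<not> precedes \<sigma> v u"
proof
  assume "precedes \<sigma> v u"
  then obtain i j where "i < j" "j < length \<sigma>" "\<sigma> ! i = v" "\<sigma> ! j = u"
    unfolding precedes_def by blast
  moreover obtain i' j' where "i' < j'" "j' < length \<sigma>" "\<sigma> ! i' = u" "\<sigma> ! j' = v"
    using assms(2) unfolding precedes_def by blast
  ultimately have "i = j'" "j = i'"
    using assms(1) by (metis nth_eq_iff_index_eq order.strict_trans)+
  then show False using \<open>i < j\<close> \<open>i' < j'\<close> by simp
qed

lemma edge_oriented_by_ordering:
  assumes "simple_graph V E" and "is_ordering V \<sigma>" and "e \<in> E"
  shows "\<exists>u v. e = {u, v} \<and> precedes \<sigma> u v"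
proof -
  obtain a b where ab: "e = {a, b}" "a \<noteq> b" "a \<in> set \<sigma>" "b \<in> set \<sigma>"
    using assms unfolding simple_graph_def is_ordering_def by blast
  obtain i j where "i < length \<sigma>" "\<sigma> ! i = a" "j < length \<sigma>" "\<sigma> ! j = b"
    using ab by (metis in_set_conv_nth)
  then have "precedes \<sigma> a b \<or> precedes \<sigma> b a"
    using ab(2) unfolding precedes_def by (metis linorder_neqE_nat)
  then show ?thesis using ab(1) by (metis insert_commute)
qed

lemma sum_q_eq_card_induced_edges:
  assumes G: "simple_graph V E" and ord: "is_ordering V \<sigma>" and "S \<subseteq> V"
    and closed: "\<And>u v. precedes \<sigma> u v \<Longrightarrow> v \<in> S \<Longrightarrow> u \<in> S"
  shows "(\<Sum>v\<in>S. q E \<sigma> v) = card (induced_edges E S)"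
proof -
  define A where "A v = {e \<in> E. \<exists>u. e = {u, v} \<and> precedes \<sigma> u v}" for v
  have "finite V" and "E \<subseteq> Pow V" using G unfolding simple_graph_def by auto
  then have fin: "finite S" "finite E"
    using \<open>S \<subseteq> V\<close> by (meson finite_Pow_iff finite_subset)+
  have disj: "A v \<inter> A w = {}" if "v \<noteq> w" for v w
  proof (rule ccontr)
    assume "A v \<inter> A w \<noteq> {}"
    then obtain u u' where "{u, v} = {u', w}" "precedes \<sigma> u v" "precedes \<sigma> u' w"
      unfolding A_def by blast
    then have "u = w" "u' = v" using that by (auto simp: doubleton_eq_iff)
    moreover have "distinct \<sigma>" using ord by (simp add: is_ordering_def)
    ultimately show False
      using \<open>precedes \<sigma> u v\<close> \<open>precedes \<sigma> u' w\<close> precedes_asym by metis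
  qed
  have "(\<Union>v\<in>S. A v) = induced_edges E S"
  proof
    show "(\<Union>v\<in>S. A v) \<subseteq> induced_edges E S"
      unfolding A_def induced_edges_def using closed by auto
    show "induced_edges E S \<subseteq> (\<Union>v\<in>S. A v)"
    proof
      fix e assume "e \<in> induced_edges E S"
      then obtain u v where "e \<in> E" "e \<subseteq> S" "e = {u, v}" "precedes \<sigma> u v"
        using edge_oriented_by_ordering[OF G ord] unfolding induced_edges_def by blast
      then show "e \<in> (\<Union>v\<in>S. A v)" unfolding A_def by blast
    qed
  qed
  moreover have "card (\<Union>v\<in>S. A v) = (\<Sum>v\<in>S. card (A v))"
    using fin disj by (intro card_UN_disjoint) (auto simp: A_def)
  ultimately show ?thesis unfolding q_def A_def by simp
qed

lemma ordering_antitone_exists: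
  fixes x :: "'a \<Rightarrow> real"
  assumes "finite V"
  shows "\<exists>\<sigma>. is_ordering V \<sigma> \<and> (\<forall>u v. precedes \<sigma> u v \<longrightarrow> x v \<le> x u)"
proof -
  obtain xs where xs: "distinct xs" "set xs = V" using finite_distinct_list[OF assms] by blast
  define \<sigma> where "\<sigma> = sort_key (\<lambda>v. - x v) xs"
  have "is_ordering V \<sigma>" using xs by (simp add: \<sigma>_def is_ordering_def)
  moreover have "sorted_wrt (\<lambda>u v. x v \<le> x u) \<sigma>"
    using sorted_sort_key[of "\<lambda>v. - x v" xs] by (simp add: \<sigma>_def sorted_map)
  then have "\<forall>u v. precedes \<sigma> u v \<longrightarrow> x v \<le> x u"
    unfolding precedes_def by (auto simp: sorted_wrt_iff_nth_less)
  ultimately show ?thesis by blast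
qed

lemma sum_q_level_set:
  fixes x :: "'a \<Rightarrow> 'b::preorder"
  assumes G: "simple_graph V E" and ord: "is_ordering V \<sigma>"
    and antitone: "\<forall>u v. precedes \<sigma> u v \<longrightarrow> x v \<le> x u"
  shows "(\<Sum>v\<in>{v\<in>V. t \<le> x v}. q E \<sigma> v) = card (induced_edges E {v\<in>V. t \<le> x v})"
proof (rule sum_q_eq_card_induced_edges[OF G ord])
  fix u v assume "precedes \<sigma> u v" "v \<in> {v\<in>V. t \<le> x v}"
  moreover have "u \<in> V" using \<open>precedes \<sigma> u v\<close> ord
    unfolding precedes_def is_ordering_def by auto
  ultimately show "u \<in> {v\<in>V. t \<le> x v}" using antitone order_trans by blast
qed auto

lemma normalized_weights_le_one:
  fixes c x :: "'a \<Rightarrow> real"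
  assumes "finite V" and "\<forall>v\<in>V. 1 \<le> c v" and "\<forall>v\<in>V. 0 \<le> x v"
    and "(\<Sum>v\<in>V. c v * x v) = 1" and "u \<in> V"
  shows "x u \<le> 1"
proof -
  have "x u \<le> c u * x u" using mult_right_mono[of 1 "c u" "x u"] assms(2,3,5) by simp
  also have "\<dots> \<le> (\<Sum>v\<in>V. c v * x v)"
    using assms(1,2,3,5)
    by (intro member_le_sum) (auto intro: mult_nonneg_nonneg order_trans[OF zero_le_one])
  finally show ?thesis using assms(4) by simp
qed

lemma normalized_weights_exists_pos:
  fixes c x :: "'a \<Rightarrow> real"
  assumes "\<forall>v\<in>V. 0 \<le> x v" and "(\<Sum>v\<in>V. c v * x v) = 1"
  shows "\<exists>v\<in>V. 0 < x v"
proof (rule ccontr)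
  assume "\<not> ?thesis"
  then have "\<forall>v\<in>V. c v * x v = 0" using assms(1) by force
  then have "(\<Sum>v\<in>V. c v * x v) = 0" by (intro sum.neutral) blast
  then show False using assms(2) by simp
qed

theorem mainTheorem9:
  fixes V :: "'a set" and E :: "'a set set" and c :: "'a \<Rightarrow> real"
    and x :: "'a \<Rightarrow> real" and lam :: real
  assumes G: "simple_graph V E"
    and c_ge: "\<forall>v\<in>V. c v \<ge> 1"
    and x_nonneg: "\<forall>v\<in>V. x v \<ge> 0"
    and x_norm: "(\<Sum>v\<in>V. c v * x v) = 1"
    and x_orders: "\<forall>\<sigma>. is_ordering V \<sigma> \<longrightarrow> (\<Sum>v\<in>V. x v * real (q E \<sigma> v)) \<ge> lam"
  shows "\<exists>\<theta>::real. 0 \<le> \<theta> \<and> \<theta> \<le> 1 \<and>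
           {v \<in> V. x v \<ge> \<theta>} \<noteq> {} \<and>
           density E c {v \<in> V. x v \<ge> \<theta>} \<ge> lam"
proof -
  have finV: "finite V" using G by (simp add: simple_graph_def)
  obtain \<sigma> where ord: "is_ordering V \<sigma>" and antitone: "\<forall>u v. precedes \<sigma> u v \<longrightarrow> x v \<le> x u"
    using ordering_antitone_exists[OF finV] by blast
  define g where "g v = real (q E \<sigma> v) - lam * c v" for v
  have "(\<Sum>v\<in>V. x v * g v) = (\<Sum>v\<in>V. x v * real (q E \<sigma> v)) - lam * (\<Sum>v\<in>V. c v * x v)"
    by (simp add: g_def algebra_simps sum_subtractf sum_distrib_left)
  then have "0 \<le> (\<Sum>v\<in>V. x v * g v)" using x_orders ord x_norm by simp
  moreover have "\<exists>v\<in>V. 0 < x v" by (rule normalized_weights_exists_pos[OF x_nonneg x_norm])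
  ultimately obtain u where u: "u \<in> V" and level: "0 \<le> (\<Sum>v\<in>{v\<in>V. x u \<le> x v}. g v)"
    using exists_level_set_sum_nonneg[OF finV x_nonneg] by blast
  define S where "S = {v\<in>V. x u \<le> x v}"
  have "lam * (\<Sum>v\<in>S. c v) \<le> real (card (induced_edges E S))"
    using level sum_q_level_set[OF G ord antitone] unfolding S_def g_def
    by (simp add: sum_subtractf sum_distrib_left flip: of_nat_sum)
  moreover have "0 < (\<Sum>v\<in>S. c v)" using u finV c_ge by (intro sum_pos) (auto simp: S_def)
  moreover have "x u \<le> 1" by (rule normalized_weights_le_one[OF finV c_ge x_nonneg x_norm u])
  ultimately show ?thesis
    using u x_nonneg unfolding S_def density_def by (fastforce simp: pos_le_divide_eq)
qed

end
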